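(* Let $L$ be a post-Lie-Rinehart algebra over $R$, with anchor map $\rho$ and connection $\rhd$. Then \[ E\ell_R(L)=\{\delta X:X\in L\}\circ \mathrm{gen}(\{\delta X,\tilde\delta X:X\in L\}). \] That is, $E\ell_R(L)$ consists exactly of the (linear combinations of) compositions $\delta X\circ\phi_1\circ\cdots\circ\phi_k$ with $k\ge0$, $X\in L$, and each $\phi_i$ of the form $\delta Y$ or $\tilde\delta Y$ with $Y\in L$. In other words, these are all the ways of repeatedly composing elements of the forms $\delta X,\tilde\delta X$ such that the leftmost factor is of the form $\delta X$.
   Context: Let $R$ be a commutative unital algebra. A Lie-Rinehart algebra over $R$ is an $R$-module $L$ with a Lie bracket $\llbracket\cdot,\cdot\rrbracket$ and an $R$-linear Lie morphism $\rho:L\to\mathrm{Der}(R)$ such that $\llbracket X,fY\rrbracket=(\rho(X)f)Y+f\llbracket X,Y\rrbracket$. A connection is a map $(X,Y)\mapsto X\rhd Y$ on $L$ that is $R$-linear in $X$ and satisfies $X\rhd(fY)=(\rho(X)f)Y+f\,X\rhd Y$. Its torsion is $T(X,Y)=X\rhd Y-Y\rhd X-\llbracket X,Y\rrbracket$ and its curvature is $\mathcal{R}(X,Y,Z)=X\rhd(Y\rhd Z)-Y\rhd(X\rhd Z)-\llbracket X,Y\rrbracket\rhd Z$. A post-Lie-Rinehart algebra is a Lie-Rinehart algebra with a connection that is flat ($\mathcal{R}=0$) and has constant torsion ($X\rhd T(Y,Z)=T(X\rhd Y,Z)+T(Y,X\rhd Z)$). Put $[X,Y]:=-T(X,Y)$.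 The connection extends to $\mathrm{Hom}_R(L)$ by $(X\rhd u)(Y)=X\rhd u(Y)-u(X\rhd Y)$. Define $\delta X(Z)=Z\rhd X$ and $\tilde\delta X(Z)=Z\rhd X+[Z,X]$. $E\ell_R(L)$ is the $R$-module subalgebra of $\mathrm{Hom}_R(L)$ (with composition as product) generated by the elements $Y_1\rhd(Y_2\rhd(\cdots(Y_n\rhd\delta X)\cdots))$ with $n\ge0$ and $X,Y_i\in L$. For a set $A$ of endomorphisms, $\mathrm{gen}(A)$ denotes the algebra generated by $A$ with composition as product. *)

theory Defs
  imports Main
begin

(* Base field k acts on the commutative unital algebra R through a unital ring
   homomorphism emb :: 'k => 'r.  L is an R-module (type 'l, scalar action sm). *)

definition k_algebra :: "('k::field \<Rightarrow> 'r::comm_ring_1) \<Rightarrow> bool" where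
  "k_algebra emb \<longleftrightarrow> emb 1 = 1 \<and> (\<forall>a b. emb (a + b) = emb a + emb b)
     \<and> (\<forall>a b. emb (a * b) = emb a * emb b)"

definition r_module :: "('r::comm_ring_1 \<Rightarrow> 'l::ab_group_add \<Rightarrow> 'l) \<Rightarrow> bool" where
  "r_module sm \<longleftrightarrow>
     (\<forall>f g X. sm (f * g) X = sm f (sm g X)) \<and> (\<forall>X. sm 1 X = X)
   \<and> (\<forall>f g X. sm (f + g) X = sm f X + sm g X)
   \<and> (\<forall>f X Y. sm f (X + Y) = sm f X + sm f Y)"

definition k_derivation :: "('k::field \<Rightarrow> 'r::comm_ring_1) \<Rightarrow> ('r \<Rightarrow> 'r) \<Rightarrow> bool" where
  "k_derivation emb D \<longleftrightarrow>
     (\<forall>f g. D (f + g) = D f + D g) \<and> (\<forall>c g. D (emb c * g) = emb c * D g)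
   \<and> (\<forall>f g. D (f * g) = f * D g + g * D f)"

definition lie_rinehart ::
  "('k::field \<Rightarrow> 'r::comm_ring_1) \<Rightarrow> ('r \<Rightarrow> 'l::ab_group_add \<Rightarrow> 'l)
   \<Rightarrow> ('l \<Rightarrow> 'l \<Rightarrow> 'l) \<Rightarrow> ('l \<Rightarrow> 'r \<Rightarrow> 'r) \<Rightarrow> bool" where
  "lie_rinehart emb sm br rho \<longleftrightarrow>
     k_algebra emb \<and> r_module sm
   \<comment> \<open>Lie bracket: k-bilinear, alternating, Jacobi\<close>
   \<and> (\<forall>X X' Y. br (X + X') Y = br X Y + br X' Y)
   \<and> (\<forall>X Y Y'. br X (Y + Y') = br X Y + br X Y')
   \<and> (\<forall>c X Y. br (sm (emb c) X) Y = sm (emb c) (br X Y))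
   \<and> (\<forall>c X Y. br X (sm (emb c) Y) = sm (emb c) (br X Y))
   \<and> (\<forall>X. br X X = 0)
   \<and> (\<forall>X Y Z. br X (br Y Z) + br Y (br Z X) + br Z (br X Y) = 0)
   \<comment> \<open>anchor: R-linear Lie morphism into Der(R)\<close>
   \<and> (\<forall>X. k_derivation emb (rho X))
   \<and> (\<forall>X Y g. rho (X + Y) g = rho X g + rho Y g)
   \<and> (\<forall>f X g. rho (sm f X) g = f * rho X g)
   \<and> (\<forall>X Y g. rho (br X Y) g = rho X (rho Y g) - rho Y (rho X g))
   \<comment> \<open>Leibniz rule\<close>
   \<and> (\<forall>X f Y. br X (sm f Y) = sm (rho X f) Y + sm f (br X Y))"

definition connection ::
  "('r::comm_ring_1 \<Rightarrow> 'l::ab_group_add \<Rightarrow> 'l) \<Rightarrow> ('l \<Rightarrow> 'r \<Rightarrow> 'r) \<Rightarrow> ('l \<Rightarrow> 'l \<Rightarrow> 'l) \<Rightarrow> bool" where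
  "connection sm rho conn \<longleftrightarrow>
     (\<forall>X X' Y. conn (X + X') Y = conn X Y + conn X' Y)
   \<and> (\<forall>f X Y. conn (sm f X) Y = sm f (conn X Y))
   \<and> (\<forall>X Y Y'. conn X (Y + Y') = conn X Y + conn X Y')
   \<and> (\<forall>X f Y. conn X (sm f Y) = sm (rho X f) Y + sm f (conn X Y))"

definition torsion :: "('l \<Rightarrow> 'l \<Rightarrow> 'l) \<Rightarrow> ('l \<Rightarrow> 'l \<Rightarrow> 'l::ab_group_add) \<Rightarrow> 'l \<Rightarrow> 'l \<Rightarrow> 'l" where
  "torsion br conn X Y = conn X Y - conn Y X - br X Y"

definition curvature :: "('l \<Rightarrow> 'l \<Rightarrow> 'l) \<Rightarrow> ('l \<Rightarrow> 'l \<Rightarrow> 'l::ab_group_add) \<Rightarrow> 'l \<Rightarrow> 'l \<Rightarrow> 'l \<Rightarrow> 'l" where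
  "curvature br conn X Y Z = conn X (conn Y Z) - conn Y (conn X Z) - conn (br X Y) Z"

definition post_lie_rinehart ::
  "('k::field \<Rightarrow> 'r::comm_ring_1) \<Rightarrow> ('r \<Rightarrow> 'l::ab_group_add \<Rightarrow> 'l)
   \<Rightarrow> ('l \<Rightarrow> 'l \<Rightarrow> 'l) \<Rightarrow> ('l \<Rightarrow> 'r \<Rightarrow> 'r) \<Rightarrow> ('l \<Rightarrow> 'l \<Rightarrow> 'l) \<Rightarrow> bool" where
  "post_lie_rinehart emb sm br rho conn \<longleftrightarrow>
     lie_rinehart emb sm br rho \<and> connection sm rho conn
   \<and> (\<forall>X Y Z. curvature br conn X Y Z = 0)
   \<and> (\<forall>X Y Z. conn X (torsion br conn Y Z)
              = torsion br conn (conn X Y) Z + torsion br conn Y (conn X Z))"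

definition pbr :: "('l \<Rightarrow> 'l \<Rightarrow> 'l) \<Rightarrow> ('l \<Rightarrow> 'l \<Rightarrow> 'l::ab_group_add) \<Rightarrow> 'l \<Rightarrow> 'l \<Rightarrow> 'l" where
  "pbr br conn X Y = - torsion br conn X Y"

definition conn_hom :: "('l \<Rightarrow> 'l \<Rightarrow> 'l::ab_group_add) \<Rightarrow> 'l \<Rightarrow> ('l \<Rightarrow> 'l) \<Rightarrow> ('l \<Rightarrow> 'l)" where
  "conn_hom conn X u = (\<lambda>Y. conn X (u Y) - u (conn X Y))"

definition delta :: "('l \<Rightarrow> 'l \<Rightarrow> 'l) \<Rightarrow> 'l \<Rightarrow> ('l \<Rightarrow> 'l)" where
  "delta conn X = (\<lambda>Z. conn Z X)"

definition delta_tilde :: "('l \<Rightarrow> 'l \<Rightarrow> 'l) \<Rightarrow> ('l \<Rightarrow> 'l \<Rightarrow> 'l::ab_group_add) \<Rightarrow> 'l \<Rightarrow> ('l \<Rightarrow> 'l)" where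
  "delta_tilde br conn X = (\<lambda>Z. conn Z X + pbr br conn Z X)"

inductive_set ell_gens :: "('l \<Rightarrow> 'l \<Rightarrow> 'l::ab_group_add) \<Rightarrow> ('l \<Rightarrow> 'l) set"
  for conn where
  base: "delta conn X \<in> ell_gens conn"
| step: "u \<in> ell_gens conn \<Longrightarrow> conn_hom conn Y u \<in> ell_gens conn"

text \<open>R-module subalgebra (not necessarily unital; composition as product) generated by A.\<close>
inductive_set r_subalg :: "('r \<Rightarrow> 'l \<Rightarrow> 'l::ab_group_add) \<Rightarrow> ('l \<Rightarrow> 'l) set \<Rightarrow> ('l \<Rightarrow> 'l) set"
  for sm A where
  gen: "u \<in> A \<Longrightarrow> u \<in> r_subalg sm A"
| zero: "(\<lambda>Y. 0) \<in> r_subalg sm A"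
| add: "u \<in> r_subalg sm A \<Longrightarrow> v \<in> r_subalg sm A \<Longrightarrow> (\<lambda>Y. u Y + v Y) \<in> r_subalg sm A"
| smult: "u \<in> r_subalg sm A \<Longrightarrow> (\<lambda>Y. sm f (u Y)) \<in> r_subalg sm A"
| comp: "u \<in> r_subalg sm A \<Longrightarrow> v \<in> r_subalg sm A \<Longrightarrow> u \<circ> v \<in> r_subalg sm A"

definition Ell :: "('r \<Rightarrow> 'l \<Rightarrow> 'l) \<Rightarrow> ('l \<Rightarrow> 'l \<Rightarrow> 'l::ab_group_add) \<Rightarrow> ('l \<Rightarrow> 'l) set" where
  "Ell sm conn = r_subalg sm (ell_gens conn)"

inductive_set r_span :: "('r \<Rightarrow> 'l \<Rightarrow> 'l::ab_group_add) \<Rightarrow> ('l \<Rightarrow> 'l) set \<Rightarrow> ('l \<Rightarrow> 'l) set"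
  for sm A where
  gen: "u \<in> A \<Longrightarrow> u \<in> r_span sm A"
| zero: "(\<lambda>Y. 0) \<in> r_span sm A"
| add: "u \<in> r_span sm A \<Longrightarrow> v \<in> r_span sm A \<Longrightarrow> (\<lambda>Y. u Y + v Y) \<in> r_span sm A"
| smult: "u \<in> r_span sm A \<Longrightarrow> (\<lambda>Y. sm f (u Y)) \<in> r_span sm A"

inductive_set delta_words :: "('l \<Rightarrow> 'l \<Rightarrow> 'l) \<Rightarrow> ('l \<Rightarrow> 'l \<Rightarrow> 'l::ab_group_add) \<Rightarrow> ('l \<Rightarrow> 'l) set"
  for br conn where
  base: "delta conn X \<in> delta_words br conn"
| step_delta: "w \<in> delta_words br conn \<Longrightarrow> w \<circ> delta conn Y \<in> delta_words br conn"
| step_tilde: "w \<in> delta_words br conn \<Longrightarrow> w \<circ> delta_tilde br conn Y \<in> delta_words br conn"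

end

theory Submission
  imports Defs "HOL.Modules"
begin

text \<open>
  Write \<open>\<delta>'X\<close> for \<open>delta_tilde br conn X\<close>. Flatness and constancy of the torsion give
  \<open>Y \<rhd> \<delta>X = \<delta>(Y \<rhd> X) - \<delta>X \<circ> \<delta>'Y\<close> and \<open>Y \<rhd> \<delta>'X = \<delta>'(Y \<rhd> X) - \<delta>X \<circ> \<delta>'Y\<close>,
  and \<open>Y \<rhd> -\<close> acts on compositions of linear maps as a derivation. Hence the
  \<open>R\<close>-span of the words \<open>\<delta>X \<circ> \<phi>\<^sub>1 \<circ> \<dots> \<circ> \<phi>\<^sub>k\<close> is closed under \<open>Y \<rhd> -\<close> and under
  composition, so it contains \<open>Ell\<close>. Conversely, the first rule puts \<open>\<delta>X \<circ> \<delta>'Y\<close>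
  into \<open>Ell\<close>, and an induction over the generators using the second rule shows that
  \<open>Ell\<close> is closed under composition with \<open>\<delta>'Y\<close> on the right, so every word lies
  in \<open>Ell\<close>.
\<close>

lemma r_module_imp_module: "r_module sm \<Longrightarrow> module sm"
  unfolding r_module_def by unfold_locales auto

context module
begin

lemma module_hom_comp_diff:
  assumes "module_hom scale scale w"
  shows "w \<circ> (\<lambda>Z. u Z - v Z) = (\<lambda>Z. (w \<circ> u) Z - (w \<circ> v) Z)"
  by (simp add: comp_def module_hom.diff[OF assms])

lemma r_span_diff:
  assumes "u \<in> r_span scale A" and "v \<in> r_span scale A"
  shows "(\<lambda>Y. u Y - v Y) \<in> r_span scale A"
  using r_span.add[OF assms(1) r_span.smult[OF assms(2), of "- 1"]] by simp

lemma r_subalg_diff: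
  assumes "u \<in> r_subalg scale A" and "v \<in> r_subalg scale A"
  shows "(\<lambda>Y. u Y - v Y) \<in> r_subalg scale A"
  using r_subalg.add[OF assms(1) r_subalg.smult[OF assms(2), of "- 1"]] by simp

lemma r_span_subset_r_subalg:
  assumes "A \<subseteq> r_subalg scale B"
  shows "r_span scale A \<subseteq> r_subalg scale B"
proof
  fix u assume "u \<in> r_span scale A"
  then show "u \<in> r_subalg scale B"
    by induction (use assms in \<open>auto intro: r_subalg.intros\<close>)
qed

lemma r_subalg_module_hom:
  assumes "\<And>a. a \<in> A \<Longrightarrow> module_hom scale scale a" and "u \<in> r_subalg scale A"
  shows "module_hom scale scale u"
  using assms(2)
proof induction
  case (gen u)
  then show ?case by (rule assms(1))
next
  case (comp u v)
  show ?case by (rule module_hom_compose[OF comp.IH(2,1)])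
qed (auto simp: module_hom_iff module_axioms scale_right_distrib mult.commute)

lemma r_span_comp_right:
  assumes "u \<in> r_span scale A" and "\<And>a. a \<in> A \<Longrightarrow> a \<circ> v \<in> r_span scale A"
  shows "u \<circ> v \<in> r_span scale A"
  using assms(1)
proof induction
  case (add u u')
  then show ?case using r_span.add[OF add.IH] by (simp add: comp_def)
next
  case (smult u f)
  then show ?case using r_span.smult[OF smult.IH, of f] by (simp add: comp_def)
qed (use assms(2) in \<open>auto simp: comp_def intro: r_span.zero\<close>)

lemma r_subalg_comp_right:
  assumes "u \<in> r_subalg scale A" and "\<And>a. a \<in> A \<Longrightarrow> a \<circ> v \<in> r_subalg scale A"
  shows "u \<circ> v \<in> r_subalg scale A"
  using assms(1)
proof induction
  case (add u u')
  then show ?case using r_subalg.add[OF add.IH] by (simp add: comp_def)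
next
  case (smult u f)
  then show ?case using r_subalg.smult[OF smult.IH, of f] by (simp add: comp_def)
next
  case (comp u u')
  show ?case using r_subalg.comp[OF comp.hyps(1) comp.IH(2)] by (simp only: comp_assoc)
qed (use assms(2) in \<open>auto simp: comp_def intro: r_subalg.zero\<close>)

lemma r_span_comp_left:
  assumes "module_hom scale scale w" and "v \<in> r_span scale A"
    and "\<And>a. a \<in> A \<Longrightarrow> w \<circ> a \<in> r_span scale A"
  shows "w \<circ> v \<in> r_span scale A"
proof -
  interpret w: module_hom scale scale w by (rule assms(1))
  from assms(2) show ?thesis
  proof induction
    case (add u u')
    then show ?case using r_span.add[OF add.IH] by (simp add: comp_def w.add)
  next
    case (smult u f)
    then show ?case using r_span.smult[OF smult.IH, of f] by (simp add: comp_def w.scale)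
  qed (use assms(3) in \<open>auto simp: comp_def intro: r_span.zero\<close>)
qed

lemma r_span_comp_closed:
  assumes "\<And>a b. a \<in> A \<Longrightarrow> b \<in> A \<Longrightarrow> a \<circ> b \<in> A"
    and "\<And>a. a \<in> A \<Longrightarrow> module_hom scale scale a"
    and "u \<in> r_span scale A" and "v \<in> r_span scale A"
  shows "u \<circ> v \<in> r_span scale A"
  using assms(3)
proof (rule r_span_comp_right)
  fix a assume "a \<in> A"
  show "a \<circ> v \<in> r_span scale A"
    using assms(2)[OF \<open>a \<in> A\<close>] assms(4)
    by (rule r_span_comp_left) (use assms(1) \<open>a \<in> A\<close> in \<open>blast intro: r_span.gen\<close>)
qed

lemma r_subalg_subset_r_span:
  assumes "A \<subseteq> r_span scale B"
    and "\<And>a b. a \<in> B \<Longrightarrow> b \<in> B \<Longrightarrow> a \<circ> b \<in> B"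
    and "\<And>b. b \<in> B \<Longrightarrow> module_hom scale scale b"
  shows "r_subalg scale A \<subseteq> r_span scale B"
proof
  fix u assume "u \<in> r_subalg scale A"
  then show "u \<in> r_span scale B"
  proof induction
    case (comp u v)
    show ?case by (rule r_span_comp_closed[OF assms(2,3) comp.IH])
  qed (use assms(1) in \<open>auto intro: r_span.intros\<close>)
qed

end

locale module_connection = module sm
  for sm :: "'r::comm_ring_1 \<Rightarrow> 'l::ab_group_add \<Rightarrow> 'l" +
  fixes rho :: "'l \<Rightarrow> 'r \<Rightarrow> 'r" and conn :: "'l \<Rightarrow> 'l \<Rightarrow> 'l"
  assumes connection: "connection sm rho conn"
begin

lemma conn_add_left: "conn (X + X') Y = conn X Y + conn X' Y"
  and conn_scale_left: "conn (sm f X) Y = sm f (conn X Y)"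
  and conn_add_right: "conn X (Y + Y') = conn X Y + conn X Y'"
  and conn_scale_right: "conn X (sm f Y) = sm (rho X f) Y + sm f (conn X Y)"
  using connection unfolding connection_def by blast+

lemma conn_diff_left: "conn (X - X') Y = conn X Y - conn X' Y"
proof -
  interpret additive "\<lambda>X. conn X Y" by standard (rule conn_add_left)
  show ?thesis by (rule diff)
qed

lemma conn_diff_right: "conn X (Y - Y') = conn X Y - conn X Y'"
proof -
  interpret additive "conn X" by standard (rule conn_add_right)
  show ?thesis by (rule diff)
qed

lemma conn_zero_right: "conn X 0 = 0"
  using conn_diff_right[of X 0 0] by simp

lemma conn_minus_right: "conn X (- Y) = - conn X Y"
  using conn_diff_right[of X 0 Y] by (simp add: conn_zero_right)

lemma delta_module_hom: "module_hom sm sm (delta conn X)"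
  by (simp add: module_hom_iff module_axioms delta_def conn_add_left conn_scale_left)

lemma conn_hom_zero: "conn_hom conn Y (\<lambda>Z. 0) = (\<lambda>Z. 0)"
  by (simp add: conn_hom_def conn_zero_right)

lemma conn_hom_add:
  "conn_hom conn Y (\<lambda>Z. u Z + v Z) = (\<lambda>Z. conn_hom conn Y u Z + conn_hom conn Y v Z)"
  by (simp add: conn_hom_def conn_add_right algebra_simps)

lemma conn_hom_scale:
  "conn_hom conn Y (\<lambda>Z. sm f (u Z))
    = (\<lambda>Z. sm (rho Y f) (u Z) + sm f (conn_hom conn Y u Z))"
  by (simp add: conn_hom_def conn_scale_right scale_right_diff_distrib add_diff_eq)

lemma conn_hom_comp:
  assumes "module_hom sm sm u"
  shows "conn_hom conn Y (u \<circ> v) = (\<lambda>Z. (conn_hom conn Y u \<circ> v) Z + (u \<circ> conn_hom conn Y v) Z)"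
  by (simp add: conn_hom_def module_hom.diff[OF assms])

lemma conn_hom_module_hom:
  assumes "module_hom sm sm u"
  shows "module_hom sm sm (conn_hom conn Y u)"
proof -
  interpret u: module_hom sm sm u by (rule assms)
  show ?thesis
    by (simp add: module_hom_iff module_axioms conn_hom_def u.add u.scale
        conn_add_right conn_add_left conn_scale_right scale_right_diff_distrib)
qed

lemma conn_hom_r_span:
  assumes "u \<in> r_span sm A" and "\<And>a. a \<in> A \<Longrightarrow> conn_hom conn Y a \<in> r_span sm A"
  shows "conn_hom conn Y u \<in> r_span sm A"
  using assms(1)
proof induction
  case (add u v)
  show ?case unfolding conn_hom_add by (rule r_span.add[OF add.IH])
next
  case (smult u f)
  show ?case
    unfolding conn_hom_scale
    by (rule r_span.add[OF r_span.smult[OF smult.hyps] r_span.smult[OF smult.IH]])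
qed (use assms(2) in \<open>auto simp: conn_hom_zero intro: r_span.zero\<close>)

lemma conn_hom_r_subalg:
  assumes "u \<in> r_subalg sm A" and "\<And>a. a \<in> A \<Longrightarrow> conn_hom conn Y a \<in> r_subalg sm A"
    and "\<And>a. a \<in> A \<Longrightarrow> module_hom sm sm a"
  shows "conn_hom conn Y u \<in> r_subalg sm A"
  using assms(1)
proof induction
  case (add u v)
  show ?case unfolding conn_hom_add by (rule r_subalg.add[OF add.IH])
next
  case (smult u f)
  show ?case
    unfolding conn_hom_scale
    by (rule r_subalg.add[OF r_subalg.smult[OF smult.hyps] r_subalg.smult[OF smult.IH]])
next
  case (comp u v)
  have "module_hom sm sm u" by (rule r_subalg_module_hom[OF assms(3) comp.hyps(1)])
  then show ?case
    by (simp only: conn_hom_comp) (intro r_subalg.add r_subalg.comp comp)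
qed (use assms(2) in \<open>auto simp: conn_hom_zero intro: r_subalg.zero\<close>)

lemma ell_gens_module_hom: "u \<in> ell_gens conn \<Longrightarrow> module_hom sm sm u"
  by (induction rule: ell_gens.induct) (simp_all add: delta_module_hom conn_hom_module_hom)

lemma conn_hom_Ell: "u \<in> Ell sm conn \<Longrightarrow> conn_hom conn Y u \<in> Ell sm conn"
  unfolding Ell_def
  by (rule conn_hom_r_subalg) (auto intro: r_subalg.gen ell_gens.step ell_gens_module_hom)

end

locale post_lie_rinehart_algebra =
  fixes emb :: "'k::field \<Rightarrow> 'r::comm_ring_1"
    and sm :: "'r \<Rightarrow> 'l::ab_group_add \<Rightarrow> 'l"
    and br :: "'l \<Rightarrow> 'l \<Rightarrow> 'l"
    and rho :: "'l \<Rightarrow> 'r \<Rightarrow> 'r"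
    and conn :: "'l \<Rightarrow> 'l \<Rightarrow> 'l"
  assumes post_lie_rinehart: "post_lie_rinehart emb sm br rho conn"

sublocale post_lie_rinehart_algebra \<subseteq> module_connection sm rho conn
  using post_lie_rinehart
  unfolding module_connection_def module_connection_axioms_def post_lie_rinehart_def
    lie_rinehart_def
  by (auto intro: r_module_imp_module)

context post_lie_rinehart_algebra
begin

lemma br_add_left: "br (X + X') Y = br X Y + br X' Y"
  and br_add_right: "br X (Y + Y') = br X Y + br X Y'"
  and br_self: "br X X = 0"
  and br_scale_right: "br X (sm f Y) = sm (rho X f) Y + sm f (br X Y)"
  using post_lie_rinehart unfolding post_lie_rinehart_def lie_rinehart_def by simp_all

lemma br_anticomm: "br X Y = - br Y X"
proof -
  have "br X Y + br Y X = br (X + Y) (X + Y)"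
    unfolding br_add_left br_add_right by (simp add: br_self)
  also have "\<dots> = 0" by (rule br_self)
  finally show ?thesis by (simp only: eq_neg_iff_add_eq_0)
qed

lemma conn_conn_flat: "conn X (conn Y Z) = conn Y (conn X Z) + conn (br X Y) Z"
proof -
  have "curvature br conn X Y Z = 0"
    using post_lie_rinehart unfolding post_lie_rinehart_def by blast
  then show ?thesis unfolding curvature_def by (simp add: algebra_simps)
qed

lemma conn_pbr:
  "conn X (pbr br conn Y Z) = pbr br conn (conn X Y) Z + pbr br conn Y (conn X Z)"
proof -
  have "conn X (torsion br conn Y Z)
      = torsion br conn (conn X Y) Z + torsion br conn Y (conn X Z)"
    using post_lie_rinehart unfolding post_lie_rinehart_def by blast
  then show ?thesis unfolding pbr_def by (simp add: conn_minus_right)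
qed

lemma delta_tilde_apply: "delta_tilde br conn X Z = conn X Z + br Z X"
  unfolding delta_tilde_def pbr_def torsion_def by (simp add: algebra_simps)

lemma delta_tilde_module_hom: "module_hom sm sm (delta_tilde br conn X)"
proof -
  have "delta_tilde br conn X (sm f Z) = sm f (delta_tilde br conn X Z)" for f Z
    using br_anticomm[of "sm f Z" X] br_anticomm[of Z X]
    by (simp add: delta_tilde_apply conn_scale_right br_scale_right scale_right_diff_distrib)
  moreover have "delta_tilde br conn X (Z + Z')
      = delta_tilde br conn X Z + delta_tilde br conn X Z'" for Z Z'
    by (simp add: delta_tilde_apply conn_add_right br_add_left algebra_simps)
  ultimately show ?thesis by (simp add: module_hom_iff module_axioms)
qed

lemma delta_words_module_hom: "w \<in> delta_words br conn \<Longrightarrow> module_hom sm sm w"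
proof (induction rule: delta_words.induct)
  case (step_delta w Y)
  show ?case by (rule module_hom_compose[OF delta_module_hom step_delta.IH])
next
  case (step_tilde w Y)
  show ?case by (rule module_hom_compose[OF delta_tilde_module_hom step_tilde.IH])
qed (rule delta_module_hom)

lemma delta_words_comp_closed:
  assumes "w \<in> delta_words br conn" and "v \<in> delta_words br conn"
  shows "w \<circ> v \<in> delta_words br conn"
  using assms(2)
proof induction
  case (base X)
  show ?case using assms(1) by (rule delta_words.step_delta)
next
  case (step_delta v Y)
  show ?case
    unfolding comp_assoc[symmetric] by (rule delta_words.step_delta[OF step_delta.IH])
next
  case (step_tilde v Y)
  show ?case
    unfolding comp_assoc[symmetric] by (rule delta_words.step_tilde[OF step_tilde.IH])
qed

lemma conn_hom_delta:
  "conn_hom conn Y (delta conn X)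
    = (\<lambda>Z. delta conn (conn Y X) Z - (delta conn X \<circ> delta_tilde br conn Y) Z)"
proof
  fix Z
  have "conn (delta_tilde br conn Y Z) X = conn (conn Y Z) X - conn (br Y Z) X"
    using br_anticomm[of Z Y] by (simp add: delta_tilde_apply conn_diff_left)
  then show "conn_hom conn Y (delta conn X) Z
      = delta conn (conn Y X) Z - (delta conn X \<circ> delta_tilde br conn Y) Z"
    by (simp add: conn_hom_def delta_def conn_conn_flat[of Y Z X])
qed

lemma conn_hom_delta_tilde:
  "conn_hom conn Y (delta_tilde br conn X)
    = (\<lambda>Z. delta_tilde br conn (conn Y X) Z - (delta conn X \<circ> delta_tilde br conn Y) Z)"
proof
  fix Z
  show "conn_hom conn Y (delta_tilde br conn X) Z
      = delta_tilde br conn (conn Y X) Z - (delta conn X \<circ> delta_tilde br conn Y) Z"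
    using fun_cong[OF conn_hom_delta, of Y X Z]
    by (simp add: conn_hom_def delta_tilde_def delta_def conn_add_right conn_pbr algebra_simps)
qed

lemma conn_hom_delta_words:
  "w \<in> delta_words br conn \<Longrightarrow> conn_hom conn Y w \<in> r_span sm (delta_words br conn)"
proof (induction arbitrary: Y rule: delta_words.induct)
  case (base X)
  show ?case
    unfolding conn_hom_delta by (intro r_span_diff r_span.gen delta_words.intros)
next
  case (step_delta w X)
  have w: "module_hom sm sm w" using step_delta.hyps by (rule delta_words_module_hom)
  have "conn_hom conn Y w \<circ> delta conn X \<in> r_span sm (delta_words br conn)"
    using step_delta.IH by (rule r_span_comp_right) (intro r_span.gen delta_words.intros)
  moreover have "w \<circ> conn_hom conn Y (delta conn X) \<in> r_span sm (delta_words br conn)"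
    unfolding conn_hom_delta module_hom_comp_diff[OF w] comp_assoc[symmetric]
    using step_delta.hyps by (intro r_span_diff r_span.gen delta_words.intros)
  ultimately show ?case
    unfolding conn_hom_comp[OF w] by (rule r_span.add)
next
  case (step_tilde w X)
  have w: "module_hom sm sm w" using step_tilde.hyps by (rule delta_words_module_hom)
  have "conn_hom conn Y w \<circ> delta_tilde br conn X \<in> r_span sm (delta_words br conn)"
    using step_tilde.IH by (rule r_span_comp_right) (intro r_span.gen delta_words.intros)
  moreover have "w \<circ> conn_hom conn Y (delta_tilde br conn X) \<in> r_span sm (delta_words br conn)"
    unfolding conn_hom_delta_tilde module_hom_comp_diff[OF w] comp_assoc[symmetric]
    using step_tilde.hyps by (intro r_span_diff r_span.gen delta_words.intros)
  ultimately show ?case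
    unfolding conn_hom_comp[OF w] by (rule r_span.add)
qed

lemma Ell_subset_r_span_delta_words: "Ell sm conn \<subseteq> r_span sm (delta_words br conn)"
  unfolding Ell_def
proof (rule r_subalg_subset_r_span)
  show "ell_gens conn \<subseteq> r_span sm (delta_words br conn)"
  proof
    fix u assume "u \<in> ell_gens conn"
    then show "u \<in> r_span sm (delta_words br conn)"
    proof induction
      case (base X)
      show ?case by (intro r_span.gen delta_words.intros)
    next
      case (step u Y)
      show ?case using step.IH by (rule conn_hom_r_span) (rule conn_hom_delta_words)
    qed
  qed
qed (simp_all add: delta_words_comp_closed delta_words_module_hom)

lemma delta_comp_delta_tilde_in_Ell: "delta conn X \<circ> delta_tilde br conn Y \<in> Ell sm conn"
proof -
  have "delta conn X \<circ> delta_tilde br conn Y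
      = (\<lambda>Z. delta conn (conn Y X) Z - conn_hom conn Y (delta conn X) Z)"
    by (rule ext) (simp add: conn_hom_delta)
  also have "\<dots> \<in> Ell sm conn"
    unfolding Ell_def by (intro r_subalg_diff r_subalg.gen ell_gens.intros)
  finally show ?thesis .
qed

lemma ell_gens_comp_delta_tilde_in_Ell:
  "u \<in> ell_gens conn \<Longrightarrow> u \<circ> delta_tilde br conn Y \<in> Ell sm conn"
proof (induction arbitrary: Y rule: ell_gens.induct)
  case (base X)
  show ?case by (rule delta_comp_delta_tilde_in_Ell)
next
  case (step u Z)
  have u: "module_hom sm sm u" using step.hyps by (rule ell_gens_module_hom)
  have "conn_hom conn Z u \<circ> delta_tilde br conn Y
      = (\<lambda>W. conn_hom conn Z (u \<circ> delta_tilde br conn Y) W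
          - ((u \<circ> delta_tilde br conn (conn Z Y)) W
             - (u \<circ> (delta conn Y \<circ> delta_tilde br conn Z)) W))"
    by (rule ext)
      (simp add: conn_hom_comp[OF u] conn_hom_delta_tilde module_hom_comp_diff[OF u])
  also have "\<dots> \<in> Ell sm conn"
  proof -
    have "u \<circ> (delta conn Y \<circ> delta_tilde br conn Z) \<in> Ell sm conn"
      using step.hyps delta_comp_delta_tilde_in_Ell unfolding Ell_def
      by (blast intro: r_subalg.comp r_subalg.gen)
    then show ?thesis
      using conn_hom_Ell[OF step.IH] step.IH unfolding Ell_def by (intro r_subalg_diff)
  qed
  finally show ?case .
qed

lemma r_span_delta_words_subset_Ell: "r_span sm (delta_words br conn) \<subseteq> Ell sm conn"
  unfolding Ell_def
proof (rule r_span_subset_r_subalg)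
  show "delta_words br conn \<subseteq> r_subalg sm (ell_gens conn)"
  proof
    fix w assume "w \<in> delta_words br conn"
    then show "w \<in> r_subalg sm (ell_gens conn)"
    proof induction
      case (base X)
      show ?case by (intro r_subalg.gen ell_gens.intros)
    next
      case (step_delta w Y)
      show ?case by (rule r_subalg.comp[OF step_delta.IH r_subalg.gen[OF ell_gens.base]])
    next
      case (step_tilde w Y)
      show ?case using step_tilde.IH
        by (rule r_subalg_comp_right) (rule ell_gens_comp_delta_tilde_in_Ell[unfolded Ell_def])
    qed
  qed
qed

end

theorem mainTheorem6:
  fixes emb :: "'k::field \<Rightarrow> 'r::comm_ring_1"
    and sm :: "'r \<Rightarrow> 'l::ab_group_add \<Rightarrow> 'l"
    and br :: "'l \<Rightarrow> 'l \<Rightarrow> 'l"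
    and rho :: "'l \<Rightarrow> 'r \<Rightarrow> 'r"
    and conn :: "'l \<Rightarrow> 'l \<Rightarrow> 'l"
  assumes "post_lie_rinehart emb sm br rho conn"
  shows "Ell sm conn = r_span sm (delta_words br conn)"
proof -
  interpret post_lie_rinehart_algebra emb sm br rho conn
    using assms by (rule post_lie_rinehart_algebra.intro)
  show ?thesis
    by (rule equalityI[OF Ell_subset_r_span_delta_words r_span_delta_words_subset_Ell])
qed

end
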